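(* Let $f$ be a partitioning of the complete directed graph with loops $K_N$ (vertex set $V$, $|V|=N$, edge set $V\times V$) into $n$ partitions such that $\mathrm{ib}(f)\le 1+\varepsilon$ and $\mathrm{rf}(f)=k$. Then there exists an $\varepsilon$-balanced intersecting system on $n$ elements with cardinality $k$.
   Context: A partitioning of a directed graph $G=(V,E)$ into $n$ partitions is a function $f:E\to P$, $|P|=n$ (identify $P=[n]$). Its imbalance is $\mathrm{ib}(f)=\dfrac{\max_{l\in P}|\{e\in E: f(e)=l\}|}{|E|/n}$. For $v\in V$, $E(v)$ is the set of edges incident to $v$, $\mathrm{rf}(f,v)=|f(E(v))|$, and $\mathrm{rf}(f)=\max_{v\in V}\mathrm{rf}(f,v)$. A system on $n$ elements is a triple $(\mathcal{F},w,s)$ where $\mathcal{F}=(F_1,\dots,F_m)$ is a collection of subsets of $[n]$, $w\in[0,1]^m$ with $\sum_i w_i=1$, and $s\in[0,1]^{m\times m\times n}$ with $\sum_p s_{ijp}=1$ for all $i,j$. It is intersecting if $s_{ijp}>0$ implies $p\in F_i\cap F_j$. It is $\varepsilon$-balanced if for all $p\in[n]$, $\sum_{i=1}^m\sum_{j=1}^m w_iw_js_{ijp}\le (1+\varepsilon)/n$. Its cardinality is the size of the largest set in $\mathcal{F}$. *)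

theory Defs
  imports Complex_Main "HOL-Library.FuncSet"
begin

definition edges_of :: "'a set \<Rightarrow> ('a \<times> 'a) set" where
  "edges_of V = V \<times> V"

definition is_partitioning :: "'a set \<Rightarrow> nat \<Rightarrow> ('a \<times> 'a \<Rightarrow> nat) \<Rightarrow> bool" where
  "is_partitioning V n f \<longleftrightarrow> f \<in> edges_of V \<rightarrow> {..<n}"

definition ib :: "'a set \<Rightarrow> nat \<Rightarrow> ('a \<times> 'a \<Rightarrow> nat) \<Rightarrow> real" where
  "ib V n f = real (Max ((\<lambda>l. card {e \<in> edges_of V. f e = l}) ` {..<n}))
              / (real (card (edges_of V)) / real n)"

definition inc_edges :: "'a set \<Rightarrow> 'a \<Rightarrow> ('a \<times> 'a) set" where
  "inc_edges V v = {e \<in> edges_of V. fst e = v \<or> snd e = v}"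

definition rf_v :: "'a set \<Rightarrow> ('a \<times> 'a \<Rightarrow> nat) \<Rightarrow> 'a \<Rightarrow> nat" where
  "rf_v V f v = card (f ` inc_edges V v)"

definition rf :: "'a set \<Rightarrow> ('a \<times> 'a \<Rightarrow> nat) \<Rightarrow> nat" where
  "rf V f = Max (rf_v V f ` V)"

text \<open>A system on n elements with m sets F 0..F (m-1) (indices shifted to 0-based),
  weights w and distributions s; elements are {0..<n}.\<close>
definition is_system :: "nat \<Rightarrow> nat \<Rightarrow> (nat \<Rightarrow> nat set) \<Rightarrow> (nat \<Rightarrow> real)
    \<Rightarrow> (nat \<Rightarrow> nat \<Rightarrow> nat \<Rightarrow> real) \<Rightarrow> bool" where
  "is_system n m F w s \<longleftrightarrow>
     (\<forall>i<m. F i \<subseteq> {..<n}) \<and>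
     (\<forall>i<m. 0 \<le> w i \<and> w i \<le> 1) \<and> (\<Sum>i<m. w i) = 1 \<and>
     (\<forall>i<m. \<forall>j<m. \<forall>p<n. 0 \<le> s i j p \<and> s i j p \<le> 1) \<and>
     (\<forall>i<m. \<forall>j<m. (\<Sum>p<n. s i j p) = 1)"

definition intersecting :: "nat \<Rightarrow> nat \<Rightarrow> (nat \<Rightarrow> nat set) \<Rightarrow> (nat \<Rightarrow> nat \<Rightarrow> nat \<Rightarrow> real) \<Rightarrow> bool" where
  "intersecting n m F s \<longleftrightarrow>
     (\<forall>i<m. \<forall>j<m. \<forall>p<n. s i j p > 0 \<longrightarrow> p \<in> F i \<inter> F j)"

definition eps_balanced :: "real \<Rightarrow> nat \<Rightarrow> nat \<Rightarrow> (nat \<Rightarrow> real) \<Rightarrow> (nat \<Rightarrow> nat \<Rightarrow> nat \<Rightarrow> real) \<Rightarrow> bool" where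
  "eps_balanced \<epsilon> n m w s \<longleftrightarrow>
     (\<forall>p<n. (\<Sum>i<m. \<Sum>j<m. w i * w j * s i j p) \<le> (1 + \<epsilon>) / real n)"

definition system_card :: "nat \<Rightarrow> (nat \<Rightarrow> nat set) \<Rightarrow> nat" where
  "system_card m F = Max ((\<lambda>i. card (F i)) ` {..<m})"

end

theory Submission
  imports Defs
begin

text \<open>Enumerate the vertices as v_0, ..., v_(N-1) and take F_i = f(E(v_i)) with uniform weights
  1/N, letting s_ij be the point mass at f(v_i, v_j). The edge (v_i, v_j) is incident to both
  endpoints, so the system is intersecting, and its cardinality is rf(f). The mass it puts on a
  partition p is |f^-1(p)| / N^2, the fraction of edges in p, which is at most
  ib(f) / n \<le> (1 + \<epsilon>) / n.\<close>

definition induced_sets :: "'a set \<Rightarrow> ('a \<times> 'a \<Rightarrow> nat) \<Rightarrow> (nat \<Rightarrow> 'a) \<Rightarrow> nat \<Rightarrow> nat set" where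
  "induced_sets V f g i = f ` inc_edges V (g i)"

definition induced_dist :: "('a \<times> 'a \<Rightarrow> nat) \<Rightarrow> (nat \<Rightarrow> 'a) \<Rightarrow> nat \<Rightarrow> nat \<Rightarrow> nat \<Rightarrow> real" where
  "induced_dist f g i j p = (if f (g i, g j) = p then 1 else 0)"

lemma sum_edges_of_enum:
  assumes "bij_betw g {..<N} V"
  shows "(\<Sum>i<N. \<Sum>j<N. h (g i, g j)) = (\<Sum>e\<in>edges_of V. h e)"
proof -
  have "(\<Sum>i<N. \<Sum>j<N. h (g i, g j)) = (\<Sum>i<N. \<Sum>y\<in>V. h (g i, y))"
    by (rule sum.cong[OF refl], rule sum.reindex_bij_betw[OF assms])
  also have "\<dots> = (\<Sum>x\<in>V. \<Sum>y\<in>V. h (x, y))"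
    using sum.reindex_bij_betw[OF assms, of "\<lambda>x. \<Sum>y\<in>V. h (x, y)"] by simp
  finally show ?thesis
    by (simp add: edges_of_def sum.cartesian_product)
qed

lemma part_fraction_le_ib:
  assumes "finite V" "V \<noteq> {}" "p < n"
  shows "real (card {e \<in> edges_of V. f e = p}) / real (card (edges_of V)) \<le> ib V n f / real n"
proof -
  define M where "M = Max ((\<lambda>l. card {e \<in> edges_of V. f e = l}) ` {..<n})"
  have "card {e \<in> edges_of V. f e = p} \<le> M"
    unfolding M_def using assms(3) by (intro Max_ge) auto
  moreover have "card (edges_of V) > 0"
    using assms(1,2) by (simp add: edges_of_def card_gt_0_iff)
  moreover have "n > 0"
    using assms(3) by simp
  ultimately show ?thesis
    unfolding ib_def M_def[symmetric] by (simp add: field_simps)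
qed

lemma is_system_induced:
  assumes "bij_betw g {..<N} V" "0 < N" "is_partitioning V n f"
  shows "is_system n N (induced_sets V f g) (\<lambda>_. 1 / real N) (induced_dist f g)"
  unfolding is_system_def
proof (intro conjI allI impI)
  fix i j assume "i < N" "j < N"
  then have "f (g i, g j) < n"
    using assms(1,3) bij_betwE
    unfolding is_partitioning_def edges_of_def by (metis PiE lessThan_iff mem_Sigma_iff)
  then show "(\<Sum>p<n. induced_dist f g i j p) = 1"
    by (simp add: induced_dist_def sum.delta)
qed (use assms(2,3) in \<open>auto simp: induced_sets_def induced_dist_def is_partitioning_def
      inc_edges_def\<close>)

lemma intersecting_induced:
  assumes "bij_betw g {..<N} V"
  shows "intersecting n N (induced_sets V f g) (induced_dist f g)"
  unfolding intersecting_def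
proof (intro allI impI)
  fix i j p assume "i < N" "j < N" "p < n" "0 < induced_dist f g i j p"
  then have "p = f (g i, g j)" "g i \<in> V" "g j \<in> V"
    using assms bij_betwE by (auto simp: induced_dist_def split: if_splits)
  then show "p \<in> induced_sets V f g i \<inter> induced_sets V f g j"
    by (auto simp: induced_sets_def inc_edges_def edges_of_def)
qed

lemma eps_balanced_induced:
  assumes "bij_betw g {..<N} V" "0 < N" "ib V n f \<le> 1 + \<epsilon>"
  shows "eps_balanced \<epsilon> n N (\<lambda>_. 1 / real N) (induced_dist f g)"
  unfolding eps_balanced_def
proof (intro allI impI)
  fix p assume "p < n"
  have "finite V" "V \<noteq> {}" "card V = N"
    using assms(1,2) bij_betw_finite bij_betw_same_card by fastforce+
  then have card_edges: "card (edges_of V) = N * N"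
    by (simp add: edges_of_def card_cartesian_product)
  have "(\<Sum>i<N. \<Sum>j<N. 1 / real N * (1 / real N) * induced_dist f g i j p)
      = (\<Sum>i<N. \<Sum>j<N. induced_dist f g i j p) / real (card (edges_of V))"
    by (simp add: card_edges sum_divide_distrib)
  also have "(\<Sum>i<N. \<Sum>j<N. induced_dist f g i j p) = (\<Sum>e\<in>edges_of V. if f e = p then 1 else 0)"
    unfolding induced_dist_def by (rule sum_edges_of_enum[OF assms(1)])
  also have "\<dots> = real (card {e \<in> edges_of V. f e = p})"
    using \<open>finite V\<close> by (simp add: edges_of_def sum.If_cases Int_def)
  also have "\<dots> / real (card (edges_of V)) \<le> ib V n f / real n"
    using part_fraction_le_ib[OF \<open>finite V\<close> \<open>V \<noteq> {}\<close> \<open>p < n\<close>] .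
  also have "\<dots> \<le> (1 + \<epsilon>) / real n"
    using assms(3) by (simp add: divide_right_mono)
  finally show "(\<Sum>i<N. \<Sum>j<N. 1 / real N * (1 / real N) * induced_dist f g i j p) \<le> (1 + \<epsilon>) / real n" .
qed

lemma system_card_induced:
  assumes "bij_betw g {..<N} V"
  shows "system_card N (induced_sets V f g) = rf V f"
proof -
  have "(\<lambda>i. card (induced_sets V f g i)) ` {..<N} = rf_v V f ` V"
    using bij_betw_imp_surj_on[OF assms] by (auto simp: induced_sets_def rf_v_def)
  then show ?thesis
    by (simp add: system_card_def rf_def)
qed

theorem lemma2:
  fixes V :: "'a set" and n k :: nat and \<epsilon> :: real and f :: "'a \<times> 'a \<Rightarrow> nat"
  assumes "finite V" and "V \<noteq> {}" and "n \<ge> 1"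
    and "is_partitioning V n f"
    and "ib V n f \<le> 1 + \<epsilon>"
    and "rf V f = k"
  shows "\<exists>m F w s. is_system n m F w s \<and> intersecting n m F s
           \<and> eps_balanced \<epsilon> n m w s \<and> system_card m F = k"
proof -
  obtain g where g: "bij_betw g {..<card V} V"
    using ex_bij_betw_nat_finite[OF assms(1)] by (auto simp: lessThan_atLeast0)
  have "0 < card V"
    using assms(1,2) by (simp add: card_gt_0_iff)
  show ?thesis
    using is_system_induced[OF g \<open>0 < card V\<close> assms(4)] intersecting_induced[OF g]
      eps_balanced_induced[OF g \<open>0 < card V\<close> assms(5)] system_card_induced[OF g] assms(6)
    by blast
qed

end
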